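(* For all $\lambda\in(0,1)\setminus\{\frac12\}$, all $x\in\mathbb{R}\setminus\mathbb{Z}$ and all integers $m\ge2$, $H(\lambda,x,m)\neq0$.
   Context: The doubly infinite Lerch zeta function is $H(\lambda,x,m)=\sum_{n\in\mathbb{Z}}\dfrac{e^{2\pi i\lambda n}}{(n-x)^m}$ for $\lambda\in[0,1)$, $x\in\mathbb{C}\setminus\mathbb{Z}$, $m>1$. *)

theory Defs
  imports "HOL-Analysis.Analysis"
begin

text \<open>For m \<ge> 2 and x not an integer the series converges absolutely, so the
  unordered sum (infsum) is the intended value.\<close>
definition lerchH :: "real \<Rightarrow> complex \<Rightarrow> nat \<Rightarrow> complex" where
  "lerchH lam x m =
     (\<Sum>\<^sub>\<infinity>n\<in>(UNIV::int set). exp (2 * of_real pi * \<i> * of_real lam * of_int n) / (of_int n - x) ^ m)"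

end

theory Submission
  imports Defs "HOL-Real_Asymp.Real_Asymp"
begin

(* Write th = 2 pi lam and a = th - pi, so that 0 < |a| < pi.  Up to the unimodular factor
   e^(i a x), H is C_m(a) + i S_m(a), where C_m and S_m are the sums of (-1)^n cos (a (n - x)) /
   (n - x)^m and (-1)^n sin (a (n - x)) / (n - x)^m; an integer shift of x only multiplies H by a
   unimodular factor, so we may take 0 < x < 1.  Termwise differentiation gives C_(m+1)' = - S_m
   and S_(m+1)' = C_m, and S_m(0) = 0, C_m(pi) = cos (pi x) * sum 1 / (n - x)^m, which is <= 0
   for odd m.  For m = 2 the sum has the closed form
   e^(i a x) (pi^2 cos (pi x) / sin (pi x)^2 - i pi a / sin (pi x)), so S_2 < 0 on (0, pi), and
   induction on m shows S_m < 0 on (0, pi) for even m and C_m < 0 on [0, pi) for odd m.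

   The closed form is proved by a doubling argument: the difference D(th, x) of the two sides is
   bounded, and splitting the sum into even and odd n gives
   D(th, x) = (D(2 th, x / 2) + e^(i th) D(2 th, (x - 1) / 2)) / 4, with 2 th reduced mod 2 pi,
   which forces D = 0. *)

section \<open>Series indexed by the integers\<close>

lemma range_int_Un_range_neg: "range int \<union> range (\<lambda>k::nat. - int k - 1) = UNIV"
proof -
  have "n \<in> range int \<union> range (\<lambda>k::nat. - int k - 1)" for n :: int
  proof (cases "n \<ge> 0")
    case True
    then show ?thesis by (intro UnI1 image_eqI[of _ _ "nat n"]) auto
  next
    case False
    then show ?thesis by (intro UnI2 image_eqI[of _ _ "nat (- n - 1)"]) auto
  qed
  then show ?thesis by blast
qed

lemma has_sum_int_halves:
  fixes f :: "int \<Rightarrow> 'a::topological_comm_monoid_add"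
  assumes "((\<lambda>k::nat. f (int k)) has_sum a) UNIV"
    and "((\<lambda>k::nat. f (- int k - 1)) has_sum b) UNIV"
  shows "(f has_sum (a + b)) UNIV"
proof -
  have "(f has_sum a) (range int)" "(f has_sum b) (range (\<lambda>k::nat. - int k - 1))"
    using assms by (subst has_sum_reindex; force simp: inj_on_def o_def)+
  moreover have "range int \<inter> range (\<lambda>k::nat. - int k - 1) = {}"
    by auto
  ultimately show ?thesis
    using has_sum_Un_disjoint range_int_Un_range_neg by metis
qed

lemma has_sum_int_parity:
  fixes f :: "int \<Rightarrow> 'a::topological_comm_monoid_add"
  assumes "((\<lambda>j. f (2 * j)) has_sum a) UNIV" and "((\<lambda>j. f (2 * j + 1)) has_sum b) UNIV"
  shows "(f has_sum (a + b)) UNIV"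
proof -
  have "(f has_sum a) (range (\<lambda>j. 2 * j))" "(f has_sum b) (range (\<lambda>j. 2 * j + 1))"
    using assms by (subst has_sum_reindex; force simp: inj_on_def o_def)+
  moreover have "range (\<lambda>j::int. 2 * j) \<inter> range (\<lambda>j. 2 * j + 1) = {}"
    by auto presburger
  moreover have "range (\<lambda>j::int. 2 * j) \<union> range (\<lambda>j. 2 * j + 1) = UNIV"
    by (auto intro: rangeI) (metis evenE oddE rangeI)
  ultimately show ?thesis
    using has_sum_Un_disjoint by metis
qed

lemma sums_int_halves:
  fixes f :: "int \<Rightarrow> 'a::banach"
  assumes "f summable_on UNIV"
  shows "(\<lambda>k. f (int k) + f (- int k - 1)) sums infsum f UNIV"
proof -
  have "(\<lambda>k::nat. f (int k)) summable_on UNIV" "(\<lambda>k::nat. f (- int k - 1)) summable_on UNIV"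
    using summable_on_subset_banach[OF assms]
    by (subst summable_on_reindex[symmetric, unfolded o_def]; force simp: inj_on_def)+
  then obtain a b where halves: "((\<lambda>k::nat. f (int k)) has_sum a) UNIV"
    "((\<lambda>k::nat. f (- int k - 1)) has_sum b) UNIV"
    by (auto simp: summable_on_def)
  show ?thesis
    using has_sum_imp_sums[OF has_sum_add[OF halves]] infsumI[OF has_sum_int_halves[OF halves]]
    by simp
qed

lemma summable_inverse_power_shift:
  fixes c :: real
  assumes "m \<ge> 2"
  shows "summable (\<lambda>k::nat. 1 / \<bar>real k + c\<bar> ^ m)"
proof (rule summable_comparison_test_ev)
  have "summable (\<lambda>k::nat. norm (inverse (real k ^ 2)))"
    using inverse_power_summable[of 2, where ?'a = real] by simp
  moreover have "(\<lambda>k::nat. 1 / (real k + c) ^ 2) \<in> O(\<lambda>k. inverse (real k ^ 2))"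
    by real_asymp
  ultimately show "summable (\<lambda>k::nat. 1 / (real k + c) ^ 2)"
    by (rule summable_comparison_test_bigo)
  have "eventually (\<lambda>k::nat. real k \<ge> 1 + \<bar>c\<bar>) sequentially"
    by real_asymp
  then show "eventually (\<lambda>k. norm (1 / \<bar>real k + c\<bar> ^ m) \<le> 1 / (real k + c) ^ 2) sequentially"
  proof eventually_elim
    case (elim k)
    then have "1 \<le> \<bar>real k + c\<bar>" by linarith
    then have "\<bar>real k + c\<bar> ^ 2 \<le> \<bar>real k + c\<bar> ^ m"
      using assms by (intro power_increasing) auto
    then show ?case
      using \<open>1 \<le> \<bar>real k + c\<bar>\<close> by (simp add: frac_le)
  qed
qed

lemma summable_on_inverse_power_int:
  fixes x :: real
  assumes "m \<ge> 2"
  shows "(\<lambda>n::int. 1 / \<bar>of_int n - x\<bar> ^ m) summable_on UNIV"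
proof -
  have "(\<lambda>k::nat. 1 / \<bar>real k + c\<bar> ^ m) summable_on UNIV" for c
    using summable_inverse_power_shift[OF assms, of c]
    by (subst summable_on_UNIV_nonneg_real_iff) auto
  from this[of "- x"] this[of "1 + x"] obtain a b
    where "((\<lambda>k::nat. 1 / \<bar>real k + - x\<bar> ^ m) has_sum a) UNIV"
      and "((\<lambda>k::nat. 1 / \<bar>real k + (1 + x)\<bar> ^ m) has_sum b) UNIV"
    by (auto simp: summable_on_def)
  moreover have "\<bar>real_of_int (- int k - 1) - x\<bar> = \<bar>real k + (1 + x)\<bar>" for k :: nat
    by linarith
  ultimately have "((\<lambda>n::int. 1 / \<bar>of_int n - x\<bar> ^ m) has_sum (a + b)) UNIV"
    by (intro has_sum_int_halves) simp_all
  then show ?thesis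
    by (auto simp: summable_on_def)
qed

lemma summable_on_int_dominated:
  fixes f :: "int \<Rightarrow> 'a::banach" and x :: real
  assumes "m \<ge> 2" and "\<And>n. norm (f n) \<le> 1 / \<bar>of_int n - x\<bar> ^ m"
  shows "f summable_on UNIV"
  using summable_on_inverse_power_int[OF assms(1)] assms(2)
  by (rule abs_summable_summable[OF Infinite_Sum.abs_summable_on_comparison_test'])

lemma has_real_derivative_infsum_int:
  fixes f f' :: "int \<Rightarrow> real \<Rightarrow> real" and M :: "int \<Rightarrow> real"
  assumes deriv: "\<And>n t. (f n has_real_derivative f' n t) (at t)"
    and bound: "\<And>n t. \<bar>f' n t\<bar> \<le> M n"
    and "M summable_on UNIV"
    and summable: "\<And>t. (\<lambda>n. f n t) summable_on UNIV"
  shows "((\<lambda>t. \<Sum>\<^sub>\<infinity>n. f n t) has_real_derivative (\<Sum>\<^sub>\<infinity>n. f' n t)) (at t)"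
proof -
  define g where "g k t = f (int k) t + f (- int k - 1) t" for k t
  define g' where "g' k t = f' (int k) t + f' (- int k - 1) t" for k t
  have summable': "(\<lambda>n. f' n t) summable_on UNIV" for t
    using \<open>M summable_on UNIV\<close> bound
    by (auto intro: abs_summable_summable[OF Infinite_Sum.abs_summable_on_comparison_test'])
  have g_sums: "(\<lambda>k. g k t) sums (\<Sum>\<^sub>\<infinity>n. f n t)" for t
    unfolding g_def by (rule sums_int_halves[OF summable])
  have g'_sums: "(\<lambda>k. g' k t) sums (\<Sum>\<^sub>\<infinity>n. f' n t)" for t
    unfolding g'_def by (rule sums_int_halves[OF summable'])
  have "summable (\<lambda>k. M (int k) + M (- int k - 1))"
    using sums_int_halves[OF \<open>M summable_on UNIV\<close>] by (rule sums_summable)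
  then have "uniformly_convergent_on UNIV (\<lambda>n t. \<Sum>k<n. g' k t)"
  proof (rule Weierstrass_m_test'_ev[rotated])
    show "\<forall>\<^sub>F k in sequentially. \<forall>t\<in>UNIV. norm (g' k t) \<le> M (int k) + M (- int k - 1)"
      unfolding g'_def using bound
      by (intro always_eventually ballI allI) (smt (verit) real_norm_def)
  qed
  moreover have "(g k has_field_derivative g' k t) (at t within UNIV)" for k t
    unfolding g_def g'_def by (auto intro!: derivative_eq_intros deriv)
  ultimately have "((\<lambda>t. \<Sum>k. g k t) has_field_derivative (\<Sum>k. g' k t)) (at t)"
    using sums_summable[OF g_sums] by (intro has_field_derivative_series'(2)[of UNIV _ _ t t]) auto
  moreover have "(\<lambda>t. \<Sum>k. g k t) = (\<lambda>t. \<Sum>\<^sub>\<infinity>n. f n t)" "(\<Sum>k. g' k t) = (\<Sum>\<^sub>\<infinity>n. f' n t)"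
    using g_sums g'_sums by (auto simp: sums_iff)
  ultimately show ?thesis
    by simp
qed

section \<open>The twisted sum and its alternating cosine and sine parts\<close>

definition alt_sign :: "int \<Rightarrow> real" where
  "alt_sign n = (if even n then 1 else -1)"

lemma abs_alt_sign [simp]: "\<bar>alt_sign n\<bar> = 1"
  by (simp add: alt_sign_def)

lemma alt_sign_mult_self [simp]: "alt_sign n * alt_sign n = 1"
  by (simp add: alt_sign_def)

lemma cos_pi_times_int: "cos (pi * of_int n) = alt_sign n"
  by (simp add: alt_sign_def cos_npi_int)

lemma cis_pi_times_int: "cis (pi * of_int n) = complex_of_real (alt_sign n)"
  by (simp add: alt_sign_def cis.ctr cos_npi_int sin_npi_int Complex_eq)

definition twisted_zeta :: "nat \<Rightarrow> real \<Rightarrow> real \<Rightarrow> complex" where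
  "twisted_zeta m th x = (\<Sum>\<^sub>\<infinity>n::int. cis (th * of_int n) / complex_of_real ((of_int n - x) ^ m))"

(* alt_zeta cos and alt_zeta sin are the sums C_m and S_m; the trigonometric function is a
   parameter so that both derivative rules come from has_real_derivative_alt_zeta. *)
definition alt_zeta :: "(real \<Rightarrow> real) \<Rightarrow> nat \<Rightarrow> real \<Rightarrow> real \<Rightarrow> real" where
  "alt_zeta \<phi> m x a = (\<Sum>\<^sub>\<infinity>n::int. alt_sign n * \<phi> (a * (of_int n - x)) / (of_int n - x) ^ m)"

definition int_zeta :: "nat \<Rightarrow> real \<Rightarrow> real" where
  "int_zeta m x = (\<Sum>\<^sub>\<infinity>n::int. 1 / (of_int n - x) ^ m)"

lemma lerchH_eq_twisted_zeta: "lerchH lam (complex_of_real x) m = twisted_zeta m (2 * pi * lam) x"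
  unfolding lerchH_def twisted_zeta_def
  by (intro infsum_cong) (simp add: cis_conv_exp mult_ac)

lemma summable_on_twisted_zeta:
  assumes "m \<ge> 2"
  shows "(\<lambda>n::int. cis (th * of_int n) / complex_of_real ((of_int n - x) ^ m)) summable_on UNIV"
  by (rule summable_on_int_dominated[OF assms, where x = x])
    (simp add: norm_divide norm_power power_abs del: of_real_power of_real_diff)

lemma summable_on_alt_zeta:
  assumes "m \<ge> 2" and "\<And>t. \<bar>\<phi> t\<bar> \<le> 1"
  shows "(\<lambda>n::int. alt_sign n * \<phi> (a * (of_int n - x)) / (of_int n - x) ^ m) summable_on UNIV"
proof (rule summable_on_int_dominated[OF assms(1)])
  fix n :: int
  show "norm (alt_sign n * \<phi> (a * (of_int n - x)) / (of_int n - x) ^ m) \<le> 1 / \<bar>of_int n - x\<bar> ^ m"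
    using assms(2) by (simp add: abs_mult power_abs divide_right_mono)
qed

lemma twisted_zeta_eq_alt_zeta:
  assumes "m \<ge> 2"
  shows "twisted_zeta m th x =
    cis ((th - pi) * x) * Complex (alt_zeta cos m x (th - pi)) (alt_zeta sin m x (th - pi))"
proof -
  define a where "a = th - pi"
  define c where "c n = alt_sign n * cos (a * (of_int n - x)) / (of_int n - x) ^ m" for n
  define s where "s n = alt_sign n * sin (a * (of_int n - x)) / (of_int n - x) ^ m" for n
  have summand: "cis (th * of_int n) / complex_of_real ((of_int n - x) ^ m) =
      cis (a * x) * (complex_of_real (c n) + \<i> * complex_of_real (s n))" for n
  proof -
    have "complex_of_real (c n) + \<i> * complex_of_real (s n) =
        complex_of_real (alt_sign n) * cis (a * (of_int n - x)) /
          complex_of_real ((of_int n - x) ^ m)"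
      by (simp add: c_def s_def cis.ctr Complex_eq) (simp add: algebra_simps add_divide_distrib)
    then have "complex_of_real (c n) + \<i> * complex_of_real (s n) =
        cis (pi * of_int n) * cis (a * (of_int n - x)) / complex_of_real ((of_int n - x) ^ m)"
      by (simp only: cis_pi_times_int)
    moreover have
      "cis (a * x) * (cis (pi * of_int n) * cis (a * (of_int n - x))) = cis (th * of_int n)"
      by (simp add: cis_mult a_def algebra_simps)
    ultimately show ?thesis
      by (metis (no_types, lifting) mult.assoc times_divide_eq_right)
  qed
  have "((\<lambda>n. cis (a * x) * (complex_of_real (c n) + \<i> * complex_of_real (s n))) has_sum
      cis (a * x) *
        (complex_of_real (alt_zeta cos m x a) + \<i> * complex_of_real (alt_zeta sin m x a))) UNIV"
    unfolding c_def s_def alt_zeta_def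
    by (intro has_sum_cmult_right has_sum_add has_sum_of_real has_sum_infsum
        summable_on_alt_zeta assms) auto
  then show ?thesis
    unfolding twisted_zeta_def summand by (simp add: infsumI a_def Complex_eq)
qed

lemma has_real_derivative_alt_zeta:
  assumes "m \<ge> 2" and "x \<notin> \<int>"
    and deriv: "\<And>t. (\<phi> has_real_derivative \<psi> t) (at t)"
    and "\<And>t. \<bar>\<phi> t\<bar> \<le> 1" and "\<And>t. \<bar>\<psi> t\<bar> \<le> 1"
  shows "(alt_zeta \<phi> (Suc m) x has_real_derivative alt_zeta \<psi> m x a) (at a)"
  unfolding alt_zeta_def
proof (rule has_real_derivative_infsum_int)
  fix n :: int and t :: real
  have "of_int n - x \<noteq> 0"
    using assms(2) by (metis Ints_of_int eq_iff_diff_eq_0)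
  have "((\<lambda>t. \<phi> (t * (of_int n - x))) has_real_derivative
      \<psi> (t * (of_int n - x)) * (of_int n - x)) (at t)"
    by (rule DERIV_chain2[OF deriv]) (auto intro!: derivative_eq_intros)
  then have "((\<lambda>t. alt_sign n * \<phi> (t * (of_int n - x)) / (of_int n - x) ^ Suc m) has_real_derivative
      alt_sign n * (\<psi> (t * (of_int n - x)) * (of_int n - x)) / (of_int n - x) ^ Suc m) (at t)"
    by (intro DERIV_cdivide DERIV_cmult)
  then show "((\<lambda>t. alt_sign n * \<phi> (t * (of_int n - x)) / (of_int n - x) ^ Suc m) has_real_derivative
      alt_sign n * \<psi> (t * (of_int n - x)) / (of_int n - x) ^ m) (at t)"
    using \<open>of_int n - x \<noteq> 0\<close> by simp
  show "\<bar>alt_sign n * \<psi> (t * (of_int n - x)) / (of_int n - x) ^ m\<bar> \<le> 1 / \<bar>of_int n - x\<bar> ^ m"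
    using assms(5) by (simp add: abs_mult power_abs divide_right_mono)
  show "(\<lambda>n. 1 / \<bar>of_int n - x\<bar> ^ m) summable_on UNIV"
    using assms(1) by (rule summable_on_inverse_power_int)
  show "(\<lambda>n. alt_sign n * \<phi> (t * (of_int n - x)) / (of_int n - x) ^ Suc m) summable_on UNIV" for t
    using assms(1,4) by (intro summable_on_alt_zeta) auto
qed

lemma alt_zeta_uminus: "alt_zeta (\<lambda>t. - \<phi> t) m x a = - alt_zeta \<phi> m x a"
  by (simp add: alt_zeta_def infsum_uminus[symmetric])

lemma alt_zeta_cos_uminus: "alt_zeta cos m x (- a) = alt_zeta cos m x a"
  by (simp add: alt_zeta_def)

lemma alt_zeta_sin_uminus: "alt_zeta sin m x (- a) = - alt_zeta sin m x a"
  by (simp add: alt_zeta_def infsum_uminus[symmetric])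

lemma alt_zeta_sin_0: "alt_zeta sin m x 0 = 0"
  by (simp add: alt_zeta_def)

lemma alt_zeta_cos_pi: "alt_zeta cos m x pi = cos (pi * x) * int_zeta m x"
proof -
  have "alt_sign n * cos (pi * (of_int n - x)) = cos (pi * x)" for n :: int
    by (simp add: right_diff_distrib cos_diff cos_pi_times_int sin_npi_int mult.assoc[symmetric]
        del: cos_npi_int)
  then show ?thesis
    unfolding alt_zeta_def int_zeta_def by (simp add: infsum_cmult_right'[symmetric])
qed

lemma twisted_zeta_shift:
  "twisted_zeta m th (x + of_int k) = cis (th * of_int k) * twisted_zeta m th x"
proof -
  have "twisted_zeta m th (x + of_int k) =
      (\<Sum>\<^sub>\<infinity>j. cis (th * of_int (j + k)) / complex_of_real ((of_int (j + k) - (x + of_int k)) ^ m))"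
    unfolding twisted_zeta_def by (rule infsum_reindex_bij_betw[OF bij_plus_right, symmetric])
  also have "\<dots> =
      (\<Sum>\<^sub>\<infinity>j. cis (th * of_int k) * (cis (th * of_int j) / complex_of_real ((of_int j - x) ^ m)))"
    by (simp add: cis_mult distrib_left add.commute)
  also have "\<dots> = cis (th * of_int k) * twisted_zeta m th x"
    unfolding twisted_zeta_def by (rule infsum_cmult_right')
  finally show ?thesis .
qed

lemma twisted_zeta_minus_2pi: "twisted_zeta m (th - 2 * pi) x = twisted_zeta m th x"
proof -
  have "cis ((th - 2 * pi) * of_int n) = cis (th * of_int n)" for n :: int
  proof -
    have "cis ((th - 2 * pi) * of_int n) = cis (th * of_int n) / cis (2 * pi * of_int n)"
      by (simp only: cis_divide left_diff_distrib)
    then show ?thesis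
      by simp
  qed
  then show ?thesis
    by (simp add: twisted_zeta_def)
qed

lemma twisted_zeta_double:
  assumes "m \<ge> 2"
  shows "twisted_zeta m th x =
    (twisted_zeta m (2 * th) (x / 2) + cis th * twisted_zeta m (2 * th) ((x - 1) / 2)) / 2 ^ m"
proof -
  let ?f = "\<lambda>th x n. cis (th * of_int n) / complex_of_real ((of_int n - x) ^ m)"
  have "(?f th x has_sum (twisted_zeta m (2 * th) (x / 2) / 2 ^ m +
      cis th * twisted_zeta m (2 * th) ((x - 1) / 2) / 2 ^ m)) UNIV"
  proof (rule has_sum_int_parity)
    have "?f th x (2 * j) = ?f (2 * th) (x / 2) j / 2 ^ m" for j
    proof -
      have "of_int (2 * j) - x = 2 * (of_int j - x / 2)"
        by simp
      then show ?thesis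
        by (simp only: power_mult_distrib) (simp add: mult_ac)
    qed
    then show "((\<lambda>j. ?f th x (2 * j)) has_sum twisted_zeta m (2 * th) (x / 2) / 2 ^ m) UNIV"
      unfolding twisted_zeta_def
      by (simp only:) (intro has_sum_divide_const has_sum_infsum summable_on_twisted_zeta assms)
    have "?f th x (2 * j + 1) = cis th * ?f (2 * th) ((x - 1) / 2) j / 2 ^ m" for j
    proof -
      have "of_int (2 * j + 1) - x = 2 * (of_int j - (x - 1) / 2)"
        by (simp add: field_simps)
      moreover have "cis (th * of_int (2 * j + 1)) = cis th * cis (2 * th * of_int j)"
        by (simp add: cis_mult algebra_simps)
      ultimately show ?thesis
        by (simp only: power_mult_distrib) (simp add: mult_ac)
    qed
    then show "((\<lambda>j. ?f th x (2 * j + 1)) has_sum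
        cis th * twisted_zeta m (2 * th) ((x - 1) / 2) / 2 ^ m) UNIV"
      unfolding twisted_zeta_def
      by (simp only: times_divide_eq_right[symmetric])
        (intro has_sum_divide_const has_sum_cmult_right has_sum_infsum
          summable_on_twisted_zeta assms)
  qed
  then show ?thesis
    unfolding twisted_zeta_def[of m th x] by (simp add: infsumI add_divide_distrib)
qed

section \<open>Elementary estimates\<close>

lemma cis_double_minus_1: "cis (2 * t) - 1 = 2 * \<i> * complex_of_real (sin t) * cis t"
  by (simp add: complex_eq_iff cos_double_sin sin_double power2_eq_square)

lemma cis_double_plus_1: "cis (2 * t) + 1 = 2 * complex_of_real (cos t) * cis t"
  by (simp add: complex_eq_iff cos_double_cos sin_double power2_eq_square)

lemma cis_2pi_times_halves:
  "cis (2 * pi * x) = cis (pi * x) ^ 2" "cis (2 * pi * (x / 2)) = cis (pi * x)"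
  "cis (2 * pi * ((x - 1) / 2)) = - cis (pi * x)"
proof -
  have "2 * pi * x = pi * x + pi * x" "2 * pi * ((x - 1) / 2) = pi * x - pi"
    by (simp_all add: field_simps)
  then show "cis (2 * pi * x) = cis (pi * x) ^ 2" "cis (2 * pi * (x / 2)) = cis (pi * x)"
    "cis (2 * pi * ((x - 1) / 2)) = - cis (pi * x)"
    by (simp_all only: power2_eq_square cis_mult cis_divide[symmetric]) simp_all
qed

lemma cis_pi_times_pm_1_nonzero:
  assumes "x \<notin> \<int>"
  shows "cis (pi * x) - 1 \<noteq> 0" and "cis (pi * x) + 1 \<noteq> 0"
proof -
  have "sin (pi * x) \<noteq> 0"
    using assms sin_times_pi_eq_0[of x] by (simp add: mult.commute)
  then have "cis (2 * (pi * x)) - 1 \<noteq> 0"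
    unfolding cis_double_minus_1 by simp
  moreover have "cis (2 * (pi * x)) - 1 = (cis (pi * x) - 1) * (cis (pi * x) + 1)"
    using cis_2pi_times_halves(1)[of x] by (simp add: power2_eq_square algebra_simps)
  ultimately show "cis (pi * x) - 1 \<noteq> 0" "cis (pi * x) + 1 \<noteq> 0"
    by auto
qed

lemma norm_cis_minus_1_le: "norm (cis v - 1) \<le> \<bar>v\<bar>"
  using Taylor_exp[of "\<i> * of_real v" 0] by (simp add: cis_conv_exp norm_mult)

lemma norm_cis_minus_linear_le: "norm (cis v - 1 - \<i> * of_real v) \<le> v ^ 2"
  using Taylor_exp[of "\<i> * of_real v" 1]
  by (simp add: cis_conv_exp norm_mult power2_eq_square diff_diff_eq)

lemma norm_cis_expansion_div_le:
  assumes "x \<noteq> 0"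
  shows "norm ((cis (b * x) - 1 - \<i> * complex_of_real (b * x)) / complex_of_real x ^ 2) \<le> b ^ 2"
    and "norm (\<i> * complex_of_real b * (cis (b * x) - 1) / complex_of_real x) \<le> b ^ 2"
proof -
  show "norm ((cis (b * x) - 1 - \<i> * complex_of_real (b * x)) / complex_of_real x ^ 2) \<le> b ^ 2"
    using norm_cis_minus_linear_le[of "b * x"] assms
    by (simp add: norm_divide norm_power divide_le_eq power_mult_distrib)
  have "\<bar>b\<bar> * norm (cis (b * x) - 1) \<le> \<bar>b\<bar> * (\<bar>b\<bar> * \<bar>x\<bar>)"
    using norm_cis_minus_1_le[of "b * x"] by (intro mult_left_mono) (auto simp: abs_mult)
  then show "norm (\<i> * complex_of_real b * (cis (b * x) - 1) / complex_of_real x) \<le> b ^ 2"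
    using assms
    by (simp add: norm_divide norm_mult divide_le_eq power2_eq_square abs_mult_self_eq mult.assoc)
qed

lemma abs_sin_minus_le:
  fixes u :: real
  shows "\<bar>sin u - u\<bar> \<le> \<bar>u\<bar> ^ 3 / 6"
  using Maclaurin_sin_bound[of u 3]
  by (simp add: sin_coeff_def numeral_3_eq_3 lessThan_Suc fact_numeral abs_minus_commute)

lemma abs_cos_minus_1_le:
  fixes u :: real
  shows "\<bar>cos u - 1\<bar> \<le> u ^ 2 / 2"
proof -
  have "sin (u / 2) ^ 2 \<le> (u / 2) ^ 2"
    using abs_sin_x_le_abs_x[of "u / 2"] by (metis abs_ge_zero power2_abs power_mono)
  then show ?thesis
    using cos_double_sin[of "u / 2"] by (simp add: power2_eq_square field_simps)
qed

lemma abs_sin_ge: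
  fixes u :: real
  assumes "\<bar>u\<bar> \<le> 2"
  shows "\<bar>u\<bar> / 3 \<le> \<bar>sin u\<bar>"
proof -
  have "\<bar>u\<bar> ^ 3 / 6 = \<bar>u\<bar> * (u ^ 2 / 6)"
    by (simp add: power2_eq_square power3_eq_cube abs_mult_self_eq)
  also have "\<dots> \<le> \<bar>u\<bar> * (2 / 3)"
    using assms abs_le_square_iff[of u 2] by (intro mult_left_mono) auto
  finally show ?thesis
    using abs_sin_minus_le[of u] by linarith
qed

lemma abs_inverse_sin_minus_inverse_le:
  fixes u :: real
  assumes "u \<noteq> 0" and "\<bar>u\<bar> \<le> 2"
  shows "\<bar>1 / sin u - 1 / u\<bar> \<le> 1"
proof -
  have sin_u: "\<bar>u\<bar> / 3 \<le> \<bar>sin u\<bar>"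
    using assms(2) by (rule abs_sin_ge)
  with assms(1) have "sin u \<noteq> 0"
    by auto
  then have "\<bar>1 / sin u - 1 / u\<bar> = \<bar>u - sin u\<bar> / (\<bar>u\<bar> * \<bar>sin u\<bar>)"
    using assms(1) by (simp add: field_simps abs_divide abs_mult abs_minus_commute)
  also have "\<dots> \<le> (\<bar>u\<bar> ^ 3 / 6) / (\<bar>u\<bar> * (\<bar>u\<bar> / 3))"
    using abs_sin_minus_le[of u] sin_u assms(1)
    by (intro frac_le mult_left_mono) (auto simp: abs_minus_commute zero_less_mult_iff)
  also have "\<dots> = \<bar>u\<bar> / 2"
    using assms(1) by (simp add: power3_eq_cube field_simps)
  finally show ?thesis
    using assms(2) by linarith
qed

lemma abs_sq_cos_minus_sin_sq_le:
  fixes u :: real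
  shows "\<bar>u ^ 2 * cos u - sin u ^ 2\<bar> \<le> 5 / 6 * u ^ 4"
proof -
  have "u ^ 2 * cos u - sin u ^ 2 = u ^ 2 * (cos u - 1) + (u - sin u) * (u + sin u)"
    by (simp add: algebra_simps power2_eq_square)
  moreover have "\<bar>u ^ 2 * (cos u - 1)\<bar> \<le> u ^ 2 * (u ^ 2 / 2)"
    unfolding abs_mult abs_power2 by (intro mult_left_mono abs_cos_minus_1_le) simp
  moreover have "\<bar>(u - sin u) * (u + sin u)\<bar> \<le> (\<bar>u\<bar> ^ 3 / 6) * (2 * \<bar>u\<bar>)"
    using abs_sin_minus_le[of u] abs_sin_x_le_abs_x[of u] unfolding abs_mult
    by (intro mult_mono) (auto simp: abs_minus_commute)
  moreover have "u ^ 2 * (u ^ 2 / 2) = u ^ 4 / 2" "(\<bar>u\<bar> ^ 3 / 6) * (2 * \<bar>u\<bar>) = u ^ 4 / 3"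
    by (simp_all add: power4_eq_xxxx power2_eq_square power3_eq_cube flip: mult.assoc)
  ultimately show ?thesis
    by linarith
qed

lemma abs_cos_div_sin_sq_minus_inverse_sq_le:
  fixes u :: real
  assumes "u \<noteq> 0" and "\<bar>u\<bar> \<le> 2"
  shows "\<bar>cos u / sin u ^ 2 - 1 / u ^ 2\<bar> \<le> 9"
proof -
  have "u ^ 2 / 9 \<le> sin u ^ 2"
    using power_mono[OF abs_sin_ge[OF assms(2)], of 2] by (simp add: power_divide)
  then have "u ^ 2 * (u ^ 2 / 9) \<le> \<bar>u ^ 2 * sin u ^ 2\<bar>"
    unfolding abs_mult abs_power2 by (rule mult_left_mono) simp
  moreover have "u ^ 2 * (u ^ 2 / 9) = u ^ 4 / 9"
    by (simp add: power4_eq_xxxx power2_eq_square)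
  ultimately have denominator: "u ^ 4 / 9 \<le> \<bar>u ^ 2 * sin u ^ 2\<bar>"
    by simp
  then have "sin u \<noteq> 0"
    using assms(1) by auto
  then have "\<bar>cos u / sin u ^ 2 - 1 / u ^ 2\<bar> = \<bar>(u ^ 2 * cos u - sin u ^ 2) / (u ^ 2 * sin u ^ 2)\<bar>"
    using assms(1) by (simp add: field_simps)
  also have "\<dots> \<le> (5 / 6 * u ^ 4) / (u ^ 4 / 9)"
    unfolding abs_divide using abs_sq_cos_minus_sin_sq_le[of u] denominator assms(1)
    by (intro frac_le) auto
  also have "\<dots> \<le> 9"
    using assms(1) by simp
  finally show ?thesis .
qed

lemma abs_pi_trig_minus_poles_le:
  assumes "x \<noteq> 0" and "\<bar>x\<bar> \<le> 1/2"
  shows "\<bar>pi / sin (pi * x) - 1 / x\<bar> \<le> pi"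
    and "\<bar>pi ^ 2 * cos (pi * x) / sin (pi * x) ^ 2 - 1 / x ^ 2\<bar> \<le> 9 * pi ^ 2"
proof -
  have "pi * x \<noteq> 0"
    using assms(1) by simp
  have "\<bar>pi * x\<bar> \<le> 4 * (1/2)"
    unfolding abs_mult using assms(2) pi_less_4 by (intro mult_mono) auto
  have "pi / sin (pi * x) - 1 / x = pi * (1 / sin (pi * x) - 1 / (pi * x))"
    by (simp add: right_diff_distrib)
  then show "\<bar>pi / sin (pi * x) - 1 / x\<bar> \<le> pi"
    using abs_inverse_sin_minus_inverse_le[OF \<open>pi * x \<noteq> 0\<close>] \<open>\<bar>pi * x\<bar> \<le> 4 * (1/2)\<close>
    by (simp add: abs_mult)
  have "pi ^ 2 * cos (pi * x) / sin (pi * x) ^ 2 - 1 / x ^ 2 =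
      pi ^ 2 * (cos (pi * x) / sin (pi * x) ^ 2 - 1 / (pi * x) ^ 2)"
    by (simp add: right_diff_distrib power_mult_distrib)
  then show "\<bar>pi ^ 2 * cos (pi * x) / sin (pi * x) ^ 2 - 1 / x ^ 2\<bar> \<le> 9 * pi ^ 2"
    using abs_cos_div_sin_sq_minus_inverse_sq_le[OF \<open>pi * x \<noteq> 0\<close>] \<open>\<bar>pi * x\<bar> \<le> 4 * (1/2)\<close>
    by (simp add: abs_mult mult.commute mult_left_mono)
qed

lemma inverse_sq_le_inverse_sq_half_shifts:
  fixes x :: real
  assumes "n \<noteq> 0" and "\<bar>x\<bar> \<le> 1/2"
  shows "1 / \<bar>of_int n - x\<bar> ^ 2 \<le> 1 / \<bar>of_int n - 1/2\<bar> ^ 2 + 1 / \<bar>of_int n + 1/2\<bar> ^ 2"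
proof (cases "n > 0")
  case True
  with assms(2) have "0 < \<bar>of_int n - 1/2 :: real\<bar>" "\<bar>of_int n - 1/2 :: real\<bar> \<le> \<bar>of_int n - x\<bar>"
    by auto
  then have "1 / \<bar>of_int n - x\<bar> ^ 2 \<le> 1 / \<bar>of_int n - 1/2\<bar> ^ 2"
    by (intro divide_left_mono power_mono mult_pos_pos) auto
  then show ?thesis
    by (simp add: add_increasing2)
next
  case False
  with assms have "0 < \<bar>of_int n + 1/2 :: real\<bar>" "\<bar>of_int n + 1/2 :: real\<bar> \<le> \<bar>of_int n - x\<bar>"
    by auto
  then have "1 / \<bar>of_int n - x\<bar> ^ 2 \<le> 1 / \<bar>of_int n + 1/2\<bar> ^ 2"
    by (intro divide_left_mono power_mono mult_pos_pos) auto
  then show ?thesis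
    by (simp add: add_increasing)
qed

section \<open>The closed form for m = 2\<close>

(* The closed form zeta2_closed comes from differentiating
   sum_n e^(i th n) / (n - x) = - pi e^(i (th - pi) x) / sin (pi x), 0 < th < 2 pi, in x.
   Written as e^(i th x) times a rational function of u = e^(2 pi i x), its doubling identities
   become identities of rational functions. *)
definition zeta2_kernel :: "real \<Rightarrow> complex \<Rightarrow> complex" where
  "zeta2_kernel th u =
    2 * of_real (pi * (th - pi)) / (u - 1) - 2 * of_real (pi ^ 2) * (u + 1) / (u - 1) ^ 2"

definition zeta2_closed :: "real \<Rightarrow> real \<Rightarrow> complex" where
  "zeta2_closed th x = cis (th * x) * zeta2_kernel th (cis (2 * pi * x))"

lemma zeta2_kernel_double:
  assumes "r - 1 \<noteq> 0" and "r + 1 \<noteq> 0"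
  shows "zeta2_kernel th (r ^ 2) = (zeta2_kernel (2 * th) r + zeta2_kernel (2 * th) (- r)) / 4"
proof -
  have *: "r ^ 2 - 1 = (r - 1) * (r + 1)" "- r - 1 = - (r + 1)" "- r + 1 = - (r - 1)"
    by (simp_all add: power2_eq_square algebra_simps)
  show ?thesis
    unfolding zeta2_kernel_def * using assms by (simp add: divide_simps del: add_eq_0_iff) algebra
qed

lemma zeta2_kernel_double_minus_2pi:
  assumes "r - 1 \<noteq> 0" and "r + 1 \<noteq> 0" and "r \<noteq> 0"
  shows "zeta2_kernel th (r ^ 2) =
    (zeta2_kernel (2 * th - 2 * pi) r - zeta2_kernel (2 * th - 2 * pi) (- r)) / (4 * r)"
proof -
  have *: "r ^ 2 - 1 = (r - 1) * (r + 1)" "- r - 1 = - (r + 1)" "- r + 1 = - (r - 1)"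
    by (simp_all add: power2_eq_square algebra_simps)
  show ?thesis
    unfolding zeta2_kernel_def * using assms by (simp add: divide_simps del: add_eq_0_iff) algebra
qed

lemma zeta2_closed_shift:
  "zeta2_closed th (x + of_int k) = cis (th * of_int k) * zeta2_closed th x"
proof -
  have "cis (2 * pi * (x + of_int k)) = cis (2 * pi * x)"
    using cis_multiple_2pi[of "of_int k"] by (simp add: distrib_left cis_mult[symmetric])
  then show ?thesis
    by (simp add: zeta2_closed_def distrib_left cis_mult[symmetric] mult.commute)
qed

lemma zeta2_closed_eq_sin_cos:
  assumes "x \<notin> \<int>"
  shows "zeta2_closed th x = cis ((th - pi) * x) *
    Complex (pi ^ 2 * cos (pi * x) / sin (pi * x) ^ 2) (- (th - pi) * pi / sin (pi * x))"
proof -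
  have "sin (pi * x) \<noteq> 0"
    using assms sin_times_pi_eq_0[of x] by (simp add: mult.commute)
  moreover have "cis (2 * pi * x) - 1 = 2 * \<i> * complex_of_real (sin (pi * x)) * cis (pi * x)"
    "cis (2 * pi * x) + 1 = 2 * complex_of_real (cos (pi * x)) * cis (pi * x)"
    using cis_double_minus_1[of "pi * x"] cis_double_plus_1[of "pi * x"]
    by (simp_all add: mult.assoc)
  moreover have "cis (th * x) = cis ((th - pi) * x) * cis (pi * x)"
    by (simp add: cis_mult algebra_simps)
  ultimately show ?thesis
    unfolding zeta2_closed_def zeta2_kernel_def
    by (simp add: Complex_eq divide_simps power2_eq_square) (simp add: algebra_simps)
qed

lemma zeta2_closed_double:
  assumes "x \<notin> \<int>"
  shows "zeta2_closed th x =
    (zeta2_closed (2 * th) (x / 2) + cis th * zeta2_closed (2 * th) ((x - 1) / 2)) / 4"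
proof -
  have "2 * th * (x / 2) = th * x" "th + 2 * th * ((x - 1) / 2) = th * x"
    by (simp_all add: field_simps)
  then have "zeta2_closed (2 * th) (x / 2) + cis th * zeta2_closed (2 * th) ((x - 1) / 2) =
      cis (th * x) *
        (zeta2_kernel (2 * th) (cis (pi * x)) + zeta2_kernel (2 * th) (- cis (pi * x)))"
    unfolding zeta2_closed_def cis_2pi_times_halves(3) unfolding cis_2pi_times_halves(2)
    by (simp only: mult.assoc[symmetric] cis_mult distrib_left)
  then show ?thesis
    using zeta2_kernel_double[OF cis_pi_times_pm_1_nonzero[OF assms]]
    by (simp add: zeta2_closed_def cis_2pi_times_halves(1))
qed

lemma zeta2_closed_double_minus_2pi:
  assumes "x \<notin> \<int>"
  shows "zeta2_closed th x =
    (zeta2_closed (2 * th - 2 * pi) (x / 2) +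
      cis th * zeta2_closed (2 * th - 2 * pi) ((x - 1) / 2)) / 4"
proof -
  have "(2 * th - 2 * pi) * (x / 2) = th * x - pi * x"
    "th + (2 * th - 2 * pi) * ((x - 1) / 2) = (th * x - pi * x) + pi"
    by (simp_all add: field_simps)
  then have "cis ((2 * th - 2 * pi) * (x / 2)) = cis (th * x) / cis (pi * x)"
    "cis th * cis ((2 * th - 2 * pi) * ((x - 1) / 2)) = - cis (th * x) / cis (pi * x)"
    by (simp_all only: cis_mult cis_divide) (simp add: cis_mult[symmetric] cis_divide)
  then have "zeta2_closed (2 * th - 2 * pi) (x / 2) +
      cis th * zeta2_closed (2 * th - 2 * pi) ((x - 1) / 2) =
      cis (th * x) * (zeta2_kernel (2 * th - 2 * pi) (cis (pi * x)) -
        zeta2_kernel (2 * th - 2 * pi) (- cis (pi * x))) / cis (pi * x)"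
    unfolding zeta2_closed_def cis_2pi_times_halves(3) unfolding cis_2pi_times_halves(2)
    by (simp only: mult.assoc[symmetric]) (simp add: algebra_simps diff_divide_distrib)
  then show ?thesis
    using zeta2_kernel_double_minus_2pi[OF cis_pi_times_pm_1_nonzero[OF assms] cis_neq_zero]
    by (simp add: zeta2_closed_def cis_2pi_times_halves(1))
qed

lemma norm_zeta2_closed_minus_inverse_sq_le:
  assumes "0 \<le> th" "th \<le> 2 * pi" and "x \<notin> \<int>" "\<bar>x\<bar> \<le> 1/2"
  shows "norm (zeta2_closed th x - 1 / complex_of_real (x ^ 2)) \<le> 12 * pi ^ 2"
proof -
  define b E where "b = th - pi" and "E = cis (b * x)"
  define P Q where "P = pi ^ 2 * cos (pi * x) / sin (pi * x) ^ 2" and "Q = pi / sin (pi * x)"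
  have "x \<noteq> 0"
    using assms(3) by auto
  have "\<bar>b\<bar> \<le> pi"
    using assms(1,2) by (auto simp: b_def)
  then have "b ^ 2 \<le> pi ^ 2"
    by (metis abs_ge_zero power2_abs power_mono)
  have closed: "zeta2_closed th x = E * (complex_of_real P - \<i> * complex_of_real (b * Q))"
    using zeta2_closed_eq_sin_cos[OF assms(3)]
    by (simp add: E_def P_def Q_def b_def Complex_eq mult_ac)
      (simp add: algebra_simps diff_divide_distrib)
  have "zeta2_closed th x - 1 / complex_of_real (x ^ 2) =
      (E - 1 - \<i> * complex_of_real (b * x)) / complex_of_real x ^ 2
      - \<i> * complex_of_real b * (E - 1) / complex_of_real x
      + E * complex_of_real (P - 1 / x ^ 2)
      - \<i> * complex_of_real b * E * complex_of_real (Q - 1 / x)"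
    unfolding closed using \<open>x \<noteq> 0\<close> by (simp add: field_simps power2_eq_square)
  moreover have "norm (A - B + C - D) \<le> norm A + norm B + norm C + norm D" for A B C D :: complex
    by (smt (verit) norm_triangle_ineq norm_triangle_ineq4)
  ultimately have "norm (zeta2_closed th x - 1 / complex_of_real (x ^ 2)) \<le>
      norm ((E - 1 - \<i> * complex_of_real (b * x)) / complex_of_real x ^ 2)
      + norm (\<i> * complex_of_real b * (E - 1) / complex_of_real x)
      + norm (E * complex_of_real (P - 1 / x ^ 2))
      + norm (\<i> * complex_of_real b * E * complex_of_real (Q - 1 / x))"
    by simp
  moreover have "norm (E * complex_of_real (P - 1 / x ^ 2)) = \<bar>P - 1 / x ^ 2\<bar>"
    "norm (\<i> * complex_of_real b * E * complex_of_real (Q - 1 / x)) = \<bar>b\<bar> * \<bar>Q - 1 / x\<bar>"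
    unfolding E_def norm_mult norm_cis norm_of_real norm_ii by simp_all
  moreover note norm_cis_expansion_div_le[OF \<open>x \<noteq> 0\<close>, of b, folded E_def]
  moreover have "\<bar>P - 1 / x ^ 2\<bar> \<le> 9 * pi ^ 2" "\<bar>b\<bar> * \<bar>Q - 1 / x\<bar> \<le> pi * pi"
    using abs_pi_trig_minus_poles_le[OF \<open>x \<noteq> 0\<close> assms(4)] \<open>\<bar>b\<bar> \<le> pi\<close>
    by (auto simp: P_def Q_def intro: mult_mono)
  ultimately show ?thesis
    using \<open>b ^ 2 \<le> pi ^ 2\<close> by (simp add: power2_eq_square)
qed

lemma twisted_zeta_2_minus_inverse_sq_bounded:
  "\<exists>B. \<forall>th x. \<bar>x\<bar> \<le> 1/2 \<longrightarrow> norm (twisted_zeta 2 th x - 1 / complex_of_real (x ^ 2)) \<le> B"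
proof -
  define g :: "int \<Rightarrow> real"
    where "g n = 1 / \<bar>of_int n - 1/2\<bar> ^ 2 + 1 / \<bar>of_int n + 1/2\<bar> ^ 2" for n
  have "(\<lambda>n. 1 / \<bar>of_int n - 1/2\<bar> ^ 2 + 1 / \<bar>of_int n - (- 1/2)\<bar> ^ 2 :: real) summable_on UNIV"
    by (intro summable_on_add summable_on_inverse_power_int) auto
  then have "g summable_on UNIV"
    by (simp add: g_def[abs_def])
  then have g: "g summable_on - {0}"
    by (rule summable_on_subset_banach) simp
  have "norm (twisted_zeta 2 th x - 1 / complex_of_real (x ^ 2)) \<le> (\<Sum>\<^sub>\<infinity>n\<in>- {0}. g n)"
    if "\<bar>x\<bar> \<le> 1/2" for th x
  proof -
    define f where "f n = cis (th * of_int n) / complex_of_real ((of_int n - x) ^ 2)" for n :: int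
    have f: "f summable_on - {0}"
      unfolding f_def by (rule summable_on_subset_banach[OF summable_on_twisted_zeta]) auto
    have "insert 0 (- {0}) = (UNIV :: int set)"
      by auto
    then have "twisted_zeta 2 th x = (\<Sum>\<^sub>\<infinity>n\<in>insert 0 (- {0}). f n)"
      by (simp add: twisted_zeta_def f_def)
    also have "\<dots> = f 0 + (\<Sum>\<^sub>\<infinity>n\<in>- {0}. f n)"
      by (rule infsum_insert[OF f]) simp
    finally have "twisted_zeta 2 th x - 1 / complex_of_real (x ^ 2) = (\<Sum>\<^sub>\<infinity>n\<in>- {0}. f n)"
      by (simp add: f_def)
    also have "norm \<dots> \<le> (\<Sum>\<^sub>\<infinity>n\<in>- {0}. g n)"
    proof (rule norm_infsum_le[OF has_sum_infsum[OF f] has_sum_infsum[OF g]])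
      fix n :: int
      assume "n \<in> - {0}"
      then show "norm (f n) \<le> g n"
        using inverse_sq_le_inverse_sq_half_shifts[OF _ that, of n]
        by (simp add: f_def g_def norm_divide del: of_real_power of_real_diff)
    qed
    finally show ?thesis .
  qed
  then show ?thesis
    by blast
qed

lemma halves_notin_Ints:
  fixes x :: real
  assumes "x \<notin> \<int>"
  shows "x / 2 \<notin> \<int>" and "(x - 1) / 2 \<notin> \<int>"
proof
  assume "x / 2 \<in> \<int>"
  then have "2 * (x / 2) \<in> \<int>"
    by (intro Ints_mult) auto
  with assms show False
    by simp
next
  show "(x - 1) / 2 \<notin> \<int>"
  proof
    assume "(x - 1) / 2 \<in> \<int>"
    then have "2 * ((x - 1) / 2) + 1 \<in> \<int>"
      by (intro Ints_add Ints_mult) auto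
    moreover have "2 * ((x - 1) / 2) + 1 = x"
      by (simp add: field_simps)
    ultimately show False
      using assms by metis
  qed
qed

lemma bounded_contraction_eq_zero:
  fixes f :: "'a \<Rightarrow> 'b::real_normed_vector"
  assumes bound: "\<And>s. s \<in> S \<Longrightarrow> norm (f s) \<le> B"
    and contract: "\<And>s. s \<in> S \<Longrightarrow> \<exists>t\<in>S. \<exists>u\<in>S. norm (f s) \<le> c * (norm (f t) + norm (f u))"
    and c: "0 \<le> c" "c < 1/2"
    and "s \<in> S"
  shows "f s = 0"
proof -
  have decay: "\<forall>s\<in>S. norm (f s) \<le> B * (2 * c) ^ n" for n
  proof (induction n)
    case 0
    then show ?case using bound by simp
  next
    case (Suc n)
    show ?case
    proof
      fix s assume "s \<in> S"
      then obtain t u where "t \<in> S" "u \<in> S" and le: "norm (f s) \<le> c * (norm (f t) + norm (f u))"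
        using contract by blast
      note le
      also have "\<dots> \<le> c * (B * (2 * c) ^ n + B * (2 * c) ^ n)"
        using Suc.IH \<open>t \<in> S\<close> \<open>u \<in> S\<close> c by (intro mult_left_mono add_mono) auto
      also have "\<dots> = B * (2 * c) ^ Suc n"
        by simp
      finally show "norm (f s) \<le> B * (2 * c) ^ Suc n" .
    qed
  qed
  have "(\<lambda>n. B * (2 * c) ^ n) \<longlonglongrightarrow> 0"
    using c by (intro tendsto_mult_right_zero LIMSEQ_power_zero) auto
  then have "norm (f s) \<le> 0"
    using decay \<open>s \<in> S\<close> by (intro LIMSEQ_le_const) auto
  then show ?thesis
    by simp
qed

definition zeta2_error :: "real \<Rightarrow> real \<Rightarrow> complex" where
  "zeta2_error th x = twisted_zeta 2 th x - zeta2_closed th x"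

lemma zeta2_error_bounded:
  "\<exists>B. \<forall>th x. x \<notin> \<int> \<longrightarrow> 0 \<le> th \<longrightarrow> th \<le> 2 * pi \<longrightarrow> norm (zeta2_error th x) \<le> B"
proof -
  obtain B
    where B: "\<And>th x. \<bar>x\<bar> \<le> 1/2 \<Longrightarrow> norm (twisted_zeta 2 th x - 1 / complex_of_real (x ^ 2)) \<le> B"
    using twisted_zeta_2_minus_inverse_sq_bounded by blast
  have "norm (zeta2_error th x) \<le> B + 12 * pi ^ 2"
    if "x \<notin> \<int>" "0 \<le> th" "th \<le> 2 * pi" for th x
  proof -
    define y where "y = x - of_int (round x)"
    have "\<bar>y\<bar> \<le> 1/2" "y \<notin> \<int>"
      using of_int_round_abs_le[of x] \<open>x \<notin> \<int>\<close> by (auto simp: y_def abs_minus_commute)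
    have "zeta2_error th x = cis (th * of_int (round x)) * zeta2_error th y"
      using twisted_zeta_shift[of 2 th y "round x"] zeta2_closed_shift[of th y "round x"]
      by (simp add: zeta2_error_def y_def algebra_simps)
    then have "norm (zeta2_error th x) = norm ((twisted_zeta 2 th y - 1 / complex_of_real (y ^ 2)) -
        (zeta2_closed th y - 1 / complex_of_real (y ^ 2)))"
      by (simp add: zeta2_error_def norm_mult)
    also have "\<dots> \<le> B + 12 * pi ^ 2"
      using B[OF \<open>\<bar>y\<bar> \<le> 1/2\<close>, of th]
        norm_zeta2_closed_minus_inverse_sq_le[OF that(2,3) \<open>y \<notin> \<int>\<close> \<open>\<bar>y\<bar> \<le> 1/2\<close>]
        norm_triangle_ineq4[of "twisted_zeta 2 th y - 1 / complex_of_real (y ^ 2)"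
          "zeta2_closed th y - 1 / complex_of_real (y ^ 2)"]
      by linarith
    finally show ?thesis .
  qed
  then show ?thesis
    by blast
qed

lemma zeta2_error_double:
  fixes th :: real
  assumes "x \<notin> \<int>"
  defines "ph \<equiv> if th < pi then 2 * th else 2 * th - 2 * pi"
  shows "zeta2_error th x = (zeta2_error ph (x / 2) + cis th * zeta2_error ph ((x - 1) / 2)) / 4"
proof -
  have "twisted_zeta 2 th x =
      (twisted_zeta 2 ph (x / 2) + cis th * twisted_zeta 2 ph ((x - 1) / 2)) / 4"
    using twisted_zeta_double[of 2 th x] by (simp add: ph_def twisted_zeta_minus_2pi)
  moreover have "zeta2_closed th x =
      (zeta2_closed ph (x / 2) + cis th * zeta2_closed ph ((x - 1) / 2)) / 4"
    using zeta2_closed_double[OF assms(1), of th] zeta2_closed_double_minus_2pi[OF assms(1), of th]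
    unfolding ph_def by (cases "th < pi") (simp_all only: if_True if_False)
  ultimately show ?thesis
    by (simp add: zeta2_error_def diff_divide_distrib algebra_simps)
qed

lemma twisted_zeta_2_eq_zeta2_closed:
  assumes "x \<notin> \<int>" and "0 \<le> th" "th < 2 * pi"
  shows "twisted_zeta 2 th x = zeta2_closed th x"
proof -
  define S :: "(real \<times> real) set" where "S = {(th, x). x \<notin> \<int> \<and> 0 \<le> th \<and> th < 2 * pi}"
  obtain B where B: "\<And>th x. x \<notin> \<int> \<Longrightarrow> 0 \<le> th \<Longrightarrow> th \<le> 2 * pi \<Longrightarrow> norm (zeta2_error th x) \<le> B"
    using zeta2_error_bounded by blast
  have bound: "norm (case_prod zeta2_error s) \<le> B" if "s \<in> S" for s
    using that B by (auto simp: S_def)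
  have contract: "\<exists>t\<in>S. \<exists>u\<in>S. norm (case_prod zeta2_error s) \<le>
      1/4 * (norm (case_prod zeta2_error t) + norm (case_prod zeta2_error u))" if "s \<in> S" for s
  proof -
    obtain th x where s: "s = (th, x)" and "x \<notin> \<int>" "0 \<le> th" "th < 2 * pi"
      using \<open>s \<in> S\<close> by (auto simp: S_def)
    define ph where "ph = (if th < pi then 2 * th else 2 * th - 2 * pi)"
    have "(ph, x / 2) \<in> S" "(ph, (x - 1) / 2) \<in> S"
      using halves_notin_Ints[OF \<open>x \<notin> \<int>\<close>] \<open>0 \<le> th\<close> \<open>th < 2 * pi\<close> by (auto simp: S_def ph_def)
    moreover have "norm (zeta2_error th x) \<le>
        1/4 * (norm (zeta2_error ph (x / 2)) + norm (zeta2_error ph ((x - 1) / 2)))"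
      unfolding zeta2_error_double[OF \<open>x \<notin> \<int>\<close>, of th, folded ph_def]
      using norm_triangle_ineq[of "zeta2_error ph (x / 2)" "cis th * zeta2_error ph ((x - 1) / 2)"]
      by (simp add: norm_mult norm_divide)
    ultimately show ?thesis
      unfolding s by force
  qed
  have "(th, x) \<in> S"
    using assms by (simp add: S_def)
  from bounded_contraction_eq_zero[OF bound contract _ _ this] show ?thesis
    by (simp add: zeta2_error_def)
qed

lemma alt_zeta_sin_2_eq:
  assumes "x \<notin> \<int>" and "- pi \<le> a" "a < pi"
  shows "alt_zeta sin 2 x a = - a * pi / sin (pi * x)"
proof -
  have "twisted_zeta 2 (a + pi) x = zeta2_closed (a + pi) x"
    using assms by (intro twisted_zeta_2_eq_zeta2_closed) auto
  then have "Complex (alt_zeta cos 2 x a) (alt_zeta sin 2 x a) =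
      Complex (pi ^ 2 * cos (pi * x) / sin (pi * x) ^ 2) (- a * pi / sin (pi * x))"
    unfolding twisted_zeta_eq_alt_zeta[OF order.refl] zeta2_closed_eq_sin_cos[OF assms(1)]
    by simp
  then show ?thesis
    by simp
qed

section \<open>Signs of the alternating parts\<close>

lemma int_zeta_sums:
  assumes "m \<ge> 2"
  shows "(\<lambda>k. 1 / (real k + 1 - x) ^ m + 1 / (- real k - x) ^ m) sums int_zeta m x"
proof -
  define g where "g j = 1 / (of_int j - (x - 1)) ^ m" for j :: int
  have "int_zeta m x = (\<Sum>\<^sub>\<infinity>j. g j)"
    unfolding int_zeta_def g_def
    by (subst infsum_reindex_bij_betw[OF bij_plus_right[of 1], symmetric]) (simp add: algebra_simps)
  moreover have "g summable_on UNIV"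
    using assms by (rule summable_on_int_dominated[where x = "x - 1"]) (simp add: g_def power_abs)
  ultimately have "(\<lambda>k. g (int k) + g (- int k - 1)) sums int_zeta m x"
    using sums_int_halves[of g] by simp
  then show ?thesis
    by (simp add: g_def algebra_simps)
qed

lemma cos_times_int_zeta_nonpos:
  assumes "odd m" and "m \<ge> 2" and "0 < x" "x < 1"
  shows "cos (pi * x) * int_zeta m x \<le> 0"
proof -
  define t where "t k = 1 / (real k + 1 - x) ^ m - 1 / (real k + x) ^ m" for k :: nat
  have "(- real k - x) ^ m = - ((real k + x) ^ m)" for k :: nat
    using power_minus_odd[OF assms(1), of "real k + x"] by simp
  then have sums: "(\<lambda>k. cos (pi * x) * t k) sums (cos (pi * x) * int_zeta m x)"
    using int_zeta_sums[OF assms(2), of x] unfolding t_def by (intro sums_mult) simp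
  have "cos (pi * x) * t k \<le> 0" for k
  proof (cases "x \<le> 1/2")
    case True
    then have "pi * x \<le> pi * (1/2)"
      by (intro mult_left_mono) auto
    then have "0 \<le> cos (pi * x)"
      using assms(3) by (intro cos_ge_zero) (auto intro: order_trans[of _ 0])
    moreover have "(real k + x) ^ m \<le> (real k + 1 - x) ^ m"
      using True assms(3) by (intro power_mono) auto
    then have "t k \<le> 0"
      using assms(3) by (simp add: t_def frac_le)
    ultimately show ?thesis
      by (simp add: mult_nonneg_nonpos)
  next
    case False
    then have "cos (pi * x) \<le> cos (pi / 2)"
      using assms(4) by (intro cos_monotone_0_pi_le) auto
    moreover have "(real k + 1 - x) ^ m \<le> (real k + x) ^ m"
      using False assms(4) by (intro power_mono) auto
    then have "0 \<le> t k"
      using assms(4) by (simp add: t_def frac_le)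
    ultimately show ?thesis
      by (simp add: mult_nonpos_nonneg)
  qed
  then show ?thesis
    using sums_le[OF _ sums sums_zero] by blast
qed

lemma alt_zeta_cos_Suc_neg:
  assumes "m \<ge> 2" and "even m" and "0 < x" "x < 1"
    and sin_neg: "\<And>t. 0 < t \<Longrightarrow> t < pi \<Longrightarrow> alt_zeta sin m x t < 0"
    and "0 \<le> a" "a < pi"
  shows "alt_zeta cos (Suc m) x a < 0"
proof -
  have "x \<notin> \<int>"
    using assms(3,4) by (auto elim: Ints_cases)
  have deriv: "(alt_zeta cos (Suc m) x has_real_derivative - alt_zeta sin m x t) (at t)" for t
    using has_real_derivative_alt_zeta[OF assms(1) \<open>x \<notin> \<int>\<close> DERIV_cos, of t]
    by (simp add: alt_zeta_uminus)
  have "alt_zeta cos (Suc m) x a < alt_zeta cos (Suc m) x pi"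
  proof (rule DERIV_pos_imp_increasing_open[OF \<open>a < pi\<close>])
    show "continuous_on {a..pi} (alt_zeta cos (Suc m) x)"
      using deriv by (intro continuous_at_imp_continuous_on ballI DERIV_isCont) auto
    show "\<exists>y. (alt_zeta cos (Suc m) x has_real_derivative y) (at t) \<and> 0 < y"
      if "a < t" "t < pi" for t
      using deriv[of t] sin_neg[of t] that \<open>0 \<le> a\<close> by auto
  qed
  also have "\<dots> \<le> 0"
    unfolding alt_zeta_cos_pi using assms by (intro cos_times_int_zeta_nonpos) auto
  finally show ?thesis .
qed

lemma alt_zeta_sin_Suc_neg:
  assumes "m \<ge> 2" and "x \<notin> \<int>"
    and cos_neg: "\<And>t. 0 \<le> t \<Longrightarrow> t < pi \<Longrightarrow> alt_zeta cos m x t < 0"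
    and "0 < a" "a < pi"
  shows "alt_zeta sin (Suc m) x a < 0"
proof -
  have "alt_zeta sin (Suc m) x a < alt_zeta sin (Suc m) x 0"
  proof (rule DERIV_neg_imp_decreasing[OF \<open>0 < a\<close>])
    show "\<exists>y. (alt_zeta sin (Suc m) x has_real_derivative y) (at t) \<and> y < 0"
      if "0 \<le> t" "t \<le> a" for t
      using has_real_derivative_alt_zeta[OF assms(1,2) DERIV_sin, of t] cos_neg[of t] that assms(5)
      by auto
  qed
  then show ?thesis
    by (simp add: alt_zeta_sin_0)
qed

lemma alt_zeta_signs:
  assumes "0 < x" "x < 1" and "m \<ge> 2"
  shows "(even m \<longrightarrow> (\<forall>a. 0 < a \<and> a < pi \<longrightarrow> alt_zeta sin m x a < 0)) \<and>
    (odd m \<longrightarrow> (\<forall>a. 0 \<le> a \<and> a < pi \<longrightarrow> alt_zeta cos m x a < 0))"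
proof -
  have "x \<notin> \<int>"
    using assms(1,2) by (auto elim: Ints_cases)
  show ?thesis
    using \<open>m \<ge> 2\<close>
  proof (induction m rule: nat_induct_at_least)
    case base
    have "0 < sin (pi * x)"
      using assms(1,2) by (intro sin_gt_zero) auto
    with \<open>x \<notin> \<int>\<close> show ?case
      by (auto simp: alt_zeta_sin_2_eq divide_pos_pos)
  next
    case (Suc m)
    then show ?case
      using alt_zeta_cos_Suc_neg[OF Suc.hyps _ assms(1,2)] alt_zeta_sin_Suc_neg[OF Suc.hyps \<open>x \<notin> \<int>\<close>]
      by auto
  qed
qed

lemma alt_zeta_cos_sin_nonzero:
  assumes "0 < x" "x < 1" and "m \<ge> 2" and "a \<noteq> 0" "\<bar>a\<bar> < pi"
  shows "alt_zeta cos m x a \<noteq> 0 \<or> alt_zeta sin m x a \<noteq> 0"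
proof -
  have "0 < \<bar>a\<bar>"
    using assms(4) by simp
  have "alt_zeta cos m x \<bar>a\<bar> \<noteq> 0 \<or> alt_zeta sin m x \<bar>a\<bar> \<noteq> 0"
  proof (cases "even m")
    case True
    then have "\<forall>b. 0 < b \<and> b < pi \<longrightarrow> alt_zeta sin m x b < 0"
      using alt_zeta_signs[OF assms(1-3)] by simp
    from this[rule_format, of "\<bar>a\<bar>"] show ?thesis
      using \<open>0 < \<bar>a\<bar>\<close> assms(5) by simp
  next
    case False
    then have "\<forall>b. 0 \<le> b \<and> b < pi \<longrightarrow> alt_zeta cos m x b < 0"
      using alt_zeta_signs[OF assms(1-3)] by simp
    from this[rule_format, of "\<bar>a\<bar>"] show ?thesis
      using assms(5) by simp
  qed
  moreover have "alt_zeta cos m x \<bar>a\<bar> = alt_zeta cos m x a"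
    "\<bar>alt_zeta sin m x \<bar>a\<bar>\<bar> = \<bar>alt_zeta sin m x a\<bar>"
    by (cases "0 \<le> a"; simp add: alt_zeta_cos_uminus alt_zeta_sin_uminus)+
  ultimately show ?thesis
    by auto
qed

lemma twisted_zeta_nonzero:
  assumes "m \<ge> 2" and "x \<notin> \<int>" and "0 < th" "th < 2 * pi" "th \<noteq> pi"
  shows "twisted_zeta m th x \<noteq> 0"
proof -
  have "0 < frac x" "frac x < 1"
    using assms(2) frac_lt_1 by simp_all
  moreover have "th - pi \<noteq> 0" "\<bar>th - pi\<bar> < pi"
    using assms(3-5) by auto
  ultimately have "alt_zeta cos m (frac x) (th - pi) \<noteq> 0 \<or> alt_zeta sin m (frac x) (th - pi) \<noteq> 0"
    using assms(1) by (intro alt_zeta_cos_sin_nonzero)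
  then have "twisted_zeta m th (frac x) \<noteq> 0"
    by (simp add: twisted_zeta_eq_alt_zeta[OF assms(1)] Complex_eq_0)
  moreover have "x = frac x + of_int \<lfloor>x\<rfloor>"
    by (simp add: frac_def)
  ultimately show ?thesis
    using twisted_zeta_shift[of m th "frac x" "\<lfloor>x\<rfloor>"] by (metis cis_neq_zero mult_eq_0_iff)
qed

theorem corollary4p8:
  fixes lam x :: real and m :: nat
  assumes "0 < lam" and "lam < 1" and "lam \<noteq> 1/2"
    and "x \<notin> \<int>"
    and "m \<ge> 2"
  shows "lerchH lam (complex_of_real x) m \<noteq> 0"
proof -
  have "2 * pi * lam < 2 * pi * 1"
    using assms(2) by (intro mult_strict_left_mono) auto
  moreover have "2 * pi * lam \<noteq> pi"
    using assms(3) by auto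
  ultimately show ?thesis
    unfolding lerchH_eq_twisted_zeta using assms(1,4,5) by (intro twisted_zeta_nonzero) auto
qed

end
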